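(* Let $Y,Z$ be complex Banach spaces, let $\mathcal B$ be a collection of non-empty subsets of $Y$, and let $I\subseteq\mathbb R^n$ be admissible with respect to the almost periodic extensions. Suppose $F:I\to Y$ is uniformly continuous and Bohr almost periodic, and $G:I\times Y\to Z$ is Bohr $\mathcal B$-almost periodic with $\overline{R(F)}=B\in\mathcal B$, where $R(F)$ is the range of $F$. If $G$ is uniformly continuous on $I\times B$, then $W:I\to Z$, $W(\mathbf t):=G(\mathbf t;F(\mathbf t))$, is uniformly continuous and Bohr almost periodic.
   Context: $\emptyset\ne I\subseteq\mathbb R^n$ with $I+I\subseteq I$ is admissible with respect to the almost periodic extensions if for every complex Banach space $V$ and every uniformly continuous Bohr almost periodic $H:I\to V$ there exists a unique Bohr almost periodic $\tilde H:\mathbb R^n\to V$ with $\tilde H=H$ on $I$. A continuous $H:I\to V$ is Bohr almost periodic if for every $\epsilon>0$ there is $l>0$ such that for each $\mathbf t_0\in I$ there is $\tau\in I$ with $|\tau-\mathbf t_0|\le l$ and $\|H(\mathbf t+\tau)-H(\mathbf t)\|\le\epsilon$ for all $\mathbf t\in I$. A continuous $G:I\times Y\to Z$ is Bohr $\mathcal B$-almost periodic if for every $B\in\mathcal B$ and $\epsilon>0$ there is $l>0$ such that for each $\mathbf t_0\in I$ there is $\tau\in I$ with $|\tau-\mathbf t_0|\le l$ and $\|G(\mathbf t+\tau;y)-G(\mathbf t;y)\|_Z\le\epsilon$ for all $\mathbf t\in I$, $y\in B$. *)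

theory Defs
  imports "HOL-Analysis.Analysis"
begin

instance bcontfun :: (metric_space, banach) banach ..

definition bohr_ap_on :: "(real^'n) set \<Rightarrow> (real^'n \<Rightarrow> 'v::real_normed_vector) \<Rightarrow> bool" where
  "bohr_ap_on I H \<longleftrightarrow> continuous_on I H \<and>
     (\<forall>\<epsilon>>0. \<exists>l>0. \<forall>t0\<in>I. \<exists>\<tau>\<in>I. norm (\<tau> - t0) \<le> l \<and>
        (\<forall>t\<in>I. norm (H (t + \<tau>) - H t) \<le> \<epsilon>))"

definition bohr_B_ap_on :: "(real^'n) set \<Rightarrow> 'y set set \<Rightarrow> ((real^'n) \<times> 'y::real_normed_vector \<Rightarrow> 'z::real_normed_vector) \<Rightarrow> bool" where
  "bohr_B_ap_on I BB G \<longleftrightarrow> continuous_on (I \<times> UNIV) G \<and>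
     (\<forall>B\<in>BB. \<forall>\<epsilon>>0. \<exists>l>0. \<forall>t0\<in>I. \<exists>\<tau>\<in>I. norm (\<tau> - t0) \<le> l \<and>
        (\<forall>t\<in>I. \<forall>y\<in>B. norm (G (t + \<tau>, y) - G (t, y)) \<le> \<epsilon>))"

definition ap_admissible_for :: "'v::banach itself \<Rightarrow> (real^'n) set \<Rightarrow> bool" where
  "ap_admissible_for _ I \<longleftrightarrow> I \<noteq> {} \<and> (\<forall>x\<in>I. \<forall>y\<in>I. x + y \<in> I) \<and>
     (\<forall>H :: real^'n \<Rightarrow> 'v. uniformly_continuous_on I H \<and> bohr_ap_on I H \<longrightarrow>
        (\<exists>!Ht. bohr_ap_on UNIV Ht \<and> (\<forall>t\<in>I. Ht t = H t)))"

end

theory Submission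
  imports Defs
begin

text \<open>
  \<open>W t = G (t, F t)\<close> is uniformly continuous as the composite of \<open>t \<mapsto> (t, F t)\<close> with \<open>G\<close>.
  For almost periodicity, admissibility extends \<open>F\<close> and the sections \<open>G (\<cdot>, y)\<close>, \<open>y \<in> B\<close>, to
  almost periodic functions on \<open>\<real>\<^sup>n\<close>. The extension of \<open>F\<close> has totally bounded range, so \<open>B\<close>
  is compact and is covered by \<open>\<delta>\<close>-balls around finitely many \<open>y\<^sub>1, \<dots>, y\<^sub>k \<in> B\<close>; by uniform
  continuity of \<open>G\<close> on \<open>I \<times> B\<close>, a common almost period \<open>\<tau> \<in> I\<close> of \<open>F, G (\<cdot>, y\<^sub>1), \<dots>,
  G (\<cdot>, y\<^sub>k)\<close> is an almost period of \<open>W\<close>. Common almost periods come from the gauges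
  \<open>\<tau> \<mapsto> sup\<^sub>u min 1 \<parallel>f (u + \<tau>) - f u\<parallel>\<close> of the extensions: a finite sum of such gauges is
  again small on a relatively dense subset of \<open>\<real>\<^sup>n\<close>, and the uniqueness of almost periodic
  extensions from \<open>I\<close> (transferred to real-valued functions by scaling a nonzero vector of
  \<open>Z\<close>) forces these small values to occur relatively densely in \<open>I\<close> itself.
\<close>

section \<open>Relatively dense sets of almost periods\<close>

definition relatively_dense_in :: "(real^'n) set \<Rightarrow> (real^'n) set \<Rightarrow> bool" where
  "relatively_dense_in I T \<longleftrightarrow> (\<exists>l>0. \<forall>t0\<in>I. \<exists>\<tau>\<in>I. norm (\<tau> - t0) \<le> l \<and> \<tau> \<in> T)"

definition almost_periods ::
    "(real^'n) set \<Rightarrow> (real^'n \<Rightarrow> 'v::real_normed_vector) \<Rightarrow> real \<Rightarrow> (real^'n) set" where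
  "almost_periods I H \<epsilon> = {\<tau>. \<forall>t\<in>I. norm (H (t + \<tau>) - H t) \<le> \<epsilon>}"

lemma bohr_ap_on_iff:
  "bohr_ap_on I H \<longleftrightarrow> continuous_on I H \<and> (\<forall>\<epsilon>>0. relatively_dense_in I (almost_periods I H \<epsilon>))"
  unfolding bohr_ap_on_def relatively_dense_in_def almost_periods_def mem_Collect_eq ..

lemma relatively_dense_in_mono:
  "relatively_dense_in I S \<Longrightarrow> S \<subseteq> T \<Longrightarrow> relatively_dense_in I T"
  unfolding relatively_dense_in_def by blast

lemma relatively_dense_in_Int_self: "relatively_dense_in I (I \<inter> S) \<longleftrightarrow> relatively_dense_in I S"
  unfolding relatively_dense_in_def by blast

lemma relatively_dense_in_UNIV: "relatively_dense_in I UNIV"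
  unfolding relatively_dense_in_def by (intro exI[of _ 1]) force

lemma relatively_dense_in_UNIVE:
  assumes "relatively_dense_in UNIV T"
  obtains l a where "l > 0" "\<And>t. norm (a t - t) \<le> l" "\<And>t. a t \<in> T"
proof -
  obtain l where "l > 0" and l: "\<forall>t. \<exists>\<tau>. norm (\<tau> - t) \<le> l \<and> \<tau> \<in> T"
    using assms unfolding relatively_dense_in_def by blast
  obtain a where "\<forall>t. norm (a t - t) \<le> l \<and> a t \<in> T"
    using choice[OF l] by blast
  with \<open>l > 0\<close> show thesis
    by (intro that[of l a]) auto
qed

lemma bohr_ap_on_const: "bohr_ap_on I (\<lambda>_. c)"
  unfolding bohr_ap_on_iff almost_periods_def by (simp add: relatively_dense_in_UNIV)

lemma bohr_ap_on_scaleR: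
  assumes "bohr_ap_on S g"
  shows "bohr_ap_on S (\<lambda>t. g t *\<^sub>R v)"
proof (cases "v = 0")
  case True
  then show ?thesis by (simp add: bohr_ap_on_const)
next
  case False
  have "almost_periods S g (\<epsilon> / norm v) \<subseteq> almost_periods S (\<lambda>t. g t *\<^sub>R v) \<epsilon>" for \<epsilon>
  proof
    fix \<tau> assume \<tau>: "\<tau> \<in> almost_periods S g (\<epsilon> / norm v)"
    have "\<bar>g (t + \<tau>) - g t\<bar> * norm v \<le> \<epsilon>" if "t \<in> S" for t
      using \<tau> that False by (simp add: almost_periods_def pos_le_divide_eq)
    then show "\<tau> \<in> almost_periods S (\<lambda>t. g t *\<^sub>R v) \<epsilon>"
      by (simp add: almost_periods_def flip: scaleR_diff_left)
  qed
  moreover have "\<epsilon> / norm v > 0" if "\<epsilon> > 0" for \<epsilon>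
    using False that by simp
  ultimately have "relatively_dense_in S (almost_periods S (\<lambda>t. g t *\<^sub>R v) \<epsilon>)" if "\<epsilon> > 0" for \<epsilon>
    using assms that unfolding bohr_ap_on_iff by (meson relatively_dense_in_mono)
  moreover have "continuous_on S (\<lambda>t. g t *\<^sub>R v)"
    using assms unfolding bohr_ap_on_iff by (intro continuous_on_scaleR continuous_on_const) simp
  ultimately show ?thesis
    unfolding bohr_ap_on_iff by blast
qed

lemma bohr_B_ap_on_section:
  assumes G: "bohr_B_ap_on I BB G" and "B \<in> BB" "y \<in> B"
  shows "bohr_ap_on I (\<lambda>t. G (t, y))"
  unfolding bohr_ap_on_iff
proof (intro conjI allI impI)
  have "continuous_on (I \<times> UNIV) G"
    using G by (simp add: bohr_B_ap_on_def)
  then show "continuous_on I (\<lambda>t. G (t, y))"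
    by (rule continuous_on_compose2[of _ _ _ "\<lambda>t. (t, y)"])
      (auto intro: continuous_on_Pair continuous_on_id continuous_on_const)
  fix \<epsilon> :: real
  assume "\<epsilon> > 0"
  with G \<open>B \<in> BB\<close> have
    "relatively_dense_in I {\<tau>. \<forall>t\<in>I. \<forall>y\<in>B. norm (G (t + \<tau>, y) - G (t, y)) \<le> \<epsilon>}"
    unfolding bohr_B_ap_on_def relatively_dense_in_def mem_Collect_eq by blast
  then show "relatively_dense_in I (almost_periods I (\<lambda>t. G (t, y)) \<epsilon>)"
    by (rule relatively_dense_in_mono) (use \<open>y \<in> B\<close> in \<open>auto simp: almost_periods_def\<close>)
qed

lemma ap_admissible_for_add_closed:
  assumes "ap_admissible_for TYPE('v::banach) I"
  shows "\<forall>x\<in>I. \<forall>y\<in>I. x + y \<in> I"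
  using assms unfolding ap_admissible_for_def by (elim conjE)

lemma ap_admissible_for_unique_extension:
  fixes H :: "real^'n \<Rightarrow> 'v::banach"
  assumes "ap_admissible_for TYPE('v) I" "uniformly_continuous_on I H" "bohr_ap_on I H"
  shows "\<exists>!Ht. bohr_ap_on UNIV Ht \<and> (\<forall>t\<in>I. Ht t = H t)"
proof -
  have "\<forall>H :: real^'n \<Rightarrow> 'v. uniformly_continuous_on I H \<and> bohr_ap_on I H \<longrightarrow>
          (\<exists>!Ht. bohr_ap_on UNIV Ht \<and> (\<forall>t\<in>I. Ht t = H t))"
    using assms(1) unfolding ap_admissible_for_def by (elim conjE)
  with assms(2,3) show ?thesis
    by blast
qed

lemma ap_admissible_for_extension:
  fixes H :: "real^'n \<Rightarrow> 'v::banach"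
  assumes "ap_admissible_for TYPE('v) I" "uniformly_continuous_on I H" "bohr_ap_on I H"
  obtains Ht where "bohr_ap_on UNIV Ht" "\<And>t. t \<in> I \<Longrightarrow> Ht t = H t"
  using ex1_implies_ex[OF ap_admissible_for_unique_extension[OF assms]] that by blast

definition ap_uniqueness_set :: "(real^'n) set \<Rightarrow> bool" where
  "ap_uniqueness_set I \<longleftrightarrow>
     (\<forall>g. bohr_ap_on UNIV (g :: _ \<Rightarrow> real) \<and> (\<forall>t\<in>I. g t = 0) \<longrightarrow> (\<forall>t. g t = 0))"

lemma ap_admissible_for_imp_ap_uniqueness_set:
  fixes I :: "(real^'n) set" and v :: "'v::banach"
  assumes adm: "ap_admissible_for TYPE('v) I" and "v \<noteq> 0"
  shows "ap_uniqueness_set I"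
  unfolding ap_uniqueness_set_def
proof (intro allI impI)
  fix g :: "real^'n \<Rightarrow> real" and t
  assume g: "bohr_ap_on UNIV g \<and> (\<forall>t\<in>I. g t = 0)"
  have unique: "\<exists>!Ht. bohr_ap_on UNIV Ht \<and> (\<forall>t\<in>I. Ht t = (0::'v))"
    using ap_admissible_for_unique_extension[OF adm uniformly_continuous_on_const bohr_ap_on_const] .
  have "bohr_ap_on UNIV (\<lambda>t. g t *\<^sub>R v)"
    using g by (intro bohr_ap_on_scaleR) simp
  with g have "(\<lambda>t. g t *\<^sub>R v) = (THE Ht. bohr_ap_on UNIV Ht \<and> (\<forall>t\<in>I. Ht t = 0))"
    by (intro the1_equality[OF unique, symmetric]) simp
  also have "\<dots> = (\<lambda>_. 0)"
    by (intro the1_equality[OF unique]) (simp add: bohr_ap_on_const)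
  finally have "g t *\<^sub>R v = 0"
    by meson
  then show "g t = 0"
    using \<open>v \<noteq> 0\<close> by simp
qed

section \<open>Almost periodic gauges\<close>

text \<open>
  Abstraction of the translation gauge \<open>shift_gauge f\<close> of an almost periodic \<open>f\<close> (below), whose
  small values are the almost periods of \<open>f\<close>; unlike almost periods, gauges can be added.
\<close>

definition ap_gauge :: "(real^'n \<Rightarrow> real) \<Rightarrow> bool" where
  "ap_gauge p \<longleftrightarrow> (\<forall>x. 0 \<le> p x) \<and> (\<forall>x. p (- x) = p x) \<and> (\<forall>x y. p (x + y) \<le> p x + p y) \<and>
     (\<forall>\<eta>>0. \<exists>\<delta>>0. \<forall>x. norm x < \<delta> \<longrightarrow> p x \<le> \<eta>) \<and>
     (\<forall>\<eta>>0. relatively_dense_in UNIV {\<tau>. p \<tau> \<le> \<eta>})"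

lemma
  assumes "ap_gauge p"
  shows ap_gauge_nonneg: "0 \<le> p x"
    and ap_gauge_minus: "p (- x) = p x"
    and ap_gauge_triangle: "p (x + y) \<le> p x + p y"
    and ap_gauge_small: "\<eta> > 0 \<Longrightarrow> \<exists>\<delta>>0. \<forall>x. norm x < \<delta> \<longrightarrow> p x \<le> \<eta>"
    and ap_gauge_relatively_dense: "\<eta> > 0 \<Longrightarrow> relatively_dense_in UNIV {\<tau>. p \<tau> \<le> \<eta>}"
  using assms unfolding ap_gauge_def by auto

lemma ap_gauge_zero:
  assumes "ap_gauge p"
  shows "p 0 = 0"
proof -
  have "p 0 \<le> 0 + \<eta>" if "\<eta> > 0" for \<eta>
    using ap_gauge_small[OF assms that] by auto
  then have "p 0 \<le> 0"
    by (rule field_le_epsilon)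
  with ap_gauge_nonneg[OF assms, of 0] show ?thesis
    by simp
qed

lemma ap_gauge_diff:
  assumes "ap_gauge p"
  shows "\<bar>p a - p b\<bar> \<le> p (a - b)"
  using ap_gauge_triangle[OF assms, of "a - b" b] ap_gauge_triangle[OF assms, of "b - a" a]
    ap_gauge_minus[OF assms, of "a - b"]
  by (simp add: abs_le_iff)

lemma ap_gauge_continuous:
  fixes p :: "real^'n \<Rightarrow> real"
  assumes "ap_gauge p"
  shows "continuous_on UNIV p"
  unfolding continuous_on_iff
proof (intro ballI allI impI)
  fix x :: "real^'n" and e :: real
  assume "e > 0"
  then obtain \<delta> where "\<delta> > 0" and \<delta>: "\<forall>x. norm x < \<delta> \<longrightarrow> p x \<le> e / 2"
    using ap_gauge_small[OF assms, of "e / 2"] by auto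
  show "\<exists>\<delta>>0. \<forall>x'\<in>UNIV. dist x' x < \<delta> \<longrightarrow> dist (p x') (p x) < e"
  proof (intro exI[of _ \<delta>] conjI ballI impI)
    fix x' assume "dist x' x < \<delta>"
    then have "p (x' - x) \<le> e / 2"
      using \<delta> by (simp add: dist_norm)
    then show "dist (p x') (p x) < e"
      using ap_gauge_diff[OF assms, of x' x] \<open>e > 0\<close> by (simp add: dist_real_def)
  qed (fact \<open>\<delta> > 0\<close>)
qed

lemma ap_gauge_const_zero: "ap_gauge (\<lambda>_. 0)"
  unfolding ap_gauge_def by (auto simp: relatively_dense_in_UNIV)

lemma bounded_range_finite_net:
  fixes d :: "'a \<Rightarrow> 'b::heine_borel" and c :: "'a \<Rightarrow> 'v::real_normed_vector"
  assumes "bounded (range d)" "\<delta> > 0"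
  obtains L where "L > 0" "\<And>t. \<exists>t'. dist (d t') (d t) < \<delta> \<and> norm (c t') \<le> L"
proof -
  have compact: "compact (closure (range d))"
    using assms(1) by (simp add: compact_eq_bounded_closed bounded_closure)
  have cover: "closure (range d) \<subseteq> (\<Union>t. ball (d t) \<delta>)"
  proof
    fix z assume "z \<in> closure (range d)"
    then have "\<exists>y\<in>range d. dist y z < \<delta>"
      using assms(2) by (simp add: closure_approachable)
    then show "z \<in> (\<Union>t. ball (d t) \<delta>)"
      by auto
  qed
  have "\<exists>T. finite T \<and> closure (range d) \<subseteq> (\<Union>t\<in>T. ball (d t) \<delta>)"
    by (rule compactE_image[OF compact _ cover]) auto
  then obtain T where "finite T" and T: "closure (range d) \<subseteq> (\<Union>t\<in>T. ball (d t) \<delta>)"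
    by blast
  define L where "L = (\<Sum>t\<in>T. norm (c t)) + 1"
  have "L > 0"
    unfolding L_def by (simp add: sum_nonneg add_nonneg_pos)
  have "d t \<in> (\<Union>t'\<in>T. ball (d t') \<delta>)" for t
    using T closure_subset[of "range d"] by blast
  moreover have "norm (c t') \<le> L" if "t' \<in> T" for t'
    using member_le_sum[of t' T "\<lambda>t. norm (c t)"] \<open>finite T\<close> that unfolding L_def by simp
  ultimately have "\<exists>t'. dist (d t') (d t) < \<delta> \<and> norm (c t') \<le> L" for t
    by fastforce
  with \<open>L > 0\<close> show thesis
    by (rule that)
qed

lemma ap_gauge_common_small:
  assumes p: "ap_gauge p" and q: "ap_gauge q" and "\<eta> > 0"
  shows "relatively_dense_in UNIV {\<tau>. p \<tau> \<le> \<eta> \<and> q \<tau> \<le> \<eta>}"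
proof -
  define e where "e = \<eta> / 3"
  have "e > 0"
    using \<open>\<eta> > 0\<close> by (simp add: e_def)
  obtain l1 a where "l1 > 0" and l1: "\<And>t. norm (a t - t) \<le> l1" and a: "\<And>t. a t \<in> {\<tau>. p \<tau> \<le> e}"
    by (rule relatively_dense_in_UNIVE[OF ap_gauge_relatively_dense[OF p \<open>e > 0\<close>]], rule that)
  obtain l2 b where "l2 > 0" and l2: "\<And>t. norm (b t - t) \<le> l2" and b: "\<And>t. b t \<in> {\<tau>. q \<tau> \<le> e}"
    by (rule relatively_dense_in_UNIVE[OF ap_gauge_relatively_dense[OF q \<open>e > 0\<close>]], rule that)
  obtain \<delta> where "\<delta> > 0" and \<delta>: "\<forall>x. norm x < \<delta> \<longrightarrow> q x \<le> e"
    using ap_gauge_small[OF q \<open>e > 0\<close>] by blast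
  define d where "d t = a t - b t" for t
  have "norm (d t) \<le> l1 + l2" for t
    using norm_triangle_ineq4[of "a t - t" "b t - t"] l1[of t] l2[of t] by (simp add: d_def)
  then have "bounded (range d)"
    by (auto simp: bounded_iff)
  obtain L where "L > 0" and L: "\<And>t. \<exists>t'. dist (d t') (d t) < \<delta> \<and> norm (a t') \<le> L"
    by (rule bounded_range_finite_net[OF \<open>bounded (range d)\<close> \<open>\<delta> > 0\<close>], rule that)
  have "\<exists>\<tau>. norm (\<tau> - t0) \<le> l1 + L \<and> p \<tau> \<le> \<eta> \<and> q \<tau> \<le> \<eta>" for t0
  proof -
    obtain t' where t': "dist (d t') (d t0) < \<delta>" and "norm (a t') \<le> L"
      using L by blast
    define \<tau> where "\<tau> = a t0 - a t'"
    have "norm (\<tau> - t0) \<le> norm (a t0 - t0) + norm (a t')"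
      using norm_triangle_ineq4[of "a t0 - t0" "a t'"] by (simp add: \<tau>_def algebra_simps)
    then have "norm (\<tau> - t0) \<le> l1 + L"
      using l1[of t0] \<open>norm (a t') \<le> L\<close> by linarith
    moreover have "p \<tau> \<le> p (a t0) + p (- a t')"
      unfolding \<tau>_def diff_conv_add_uminus by (rule ap_gauge_triangle[OF p])
    then have "p \<tau> \<le> \<eta>"
      using a[of t0] a[of t'] ap_gauge_minus[OF p, of "a t'"] \<open>e > 0\<close> by (simp add: e_def)
    moreover have "\<tau> = (b t0 + - b t') + (d t0 - d t')"
      by (simp add: \<tau>_def d_def algebra_simps)
    then have "q \<tau> \<le> q (b t0 + - b t') + q (d t0 - d t')"
      using ap_gauge_triangle[OF q] by metis
    moreover have "q (b t0 + - b t') \<le> q (b t0) + q (- b t')"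
      by (rule ap_gauge_triangle[OF q])
    moreover have "q (d t0 - d t') \<le> e"
      using \<delta> t' by (simp add: dist_norm norm_minus_commute)
    ultimately show ?thesis
      using b[of t0] b[of t'] ap_gauge_minus[OF q, of "b t'"] unfolding e_def mem_Collect_eq by (intro exI[of _ \<tau>]) linarith
  qed
  moreover have "l1 + L > 0"
    using \<open>l1 > 0\<close> \<open>L > 0\<close> by simp
  ultimately show ?thesis
    unfolding relatively_dense_in_def by blast
qed

lemma ap_gauge_add:
  fixes p q :: "real^'n \<Rightarrow> real"
  assumes p: "ap_gauge p" and q: "ap_gauge q"
  shows "ap_gauge (\<lambda>x. p x + q x)"
  unfolding ap_gauge_def
proof (intro conjI allI impI)
  fix x y :: "real^'n" and \<eta> :: real
  show "0 \<le> p x + q x"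
    using ap_gauge_nonneg[OF p] ap_gauge_nonneg[OF q] by (simp add: add_nonneg_nonneg)
  show "p (- x) + q (- x) = p x + q x"
    using ap_gauge_minus[OF p] ap_gauge_minus[OF q] by simp
  show "p (x + y) + q (x + y) \<le> p x + q x + (p y + q y)"
    using ap_gauge_triangle[OF p, of x y] ap_gauge_triangle[OF q, of x y] by linarith
  assume "\<eta> > 0"
  then have "\<eta> / 2 > 0"
    by simp
  obtain \<delta>1 where "\<delta>1 > 0" and \<delta>1: "\<forall>x. norm x < \<delta>1 \<longrightarrow> p x \<le> \<eta> / 2"
    using ap_gauge_small[OF p \<open>\<eta> / 2 > 0\<close>] by blast
  obtain \<delta>2 where "\<delta>2 > 0" and \<delta>2: "\<forall>x. norm x < \<delta>2 \<longrightarrow> q x \<le> \<eta> / 2"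
    using ap_gauge_small[OF q \<open>\<eta> / 2 > 0\<close>] by blast
  have "p x + q x \<le> \<eta>" if "norm x < min \<delta>1 \<delta>2" for x
    using \<delta>1 \<delta>2 that by fastforce
  with \<open>\<delta>1 > 0\<close> \<open>\<delta>2 > 0\<close> show "\<exists>\<delta>>0. \<forall>x. norm x < \<delta> \<longrightarrow> p x + q x \<le> \<eta>"
    by (intro exI[of _ "min \<delta>1 \<delta>2"]) simp
  show "relatively_dense_in UNIV {\<tau>. p \<tau> + q \<tau> \<le> \<eta>}"
    using ap_gauge_common_small[OF p q \<open>\<eta> / 2 > 0\<close>]
    by (rule relatively_dense_in_mono) auto
qed

lemma ap_gauge_sum:
  assumes "finite S" "\<And>i. i \<in> S \<Longrightarrow> ap_gauge (p i)"
  shows "ap_gauge (\<lambda>x. \<Sum>i\<in>S. p i x)"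
  using assms
proof (induction S rule: finite_induct)
  case empty
  then show ?case
    by (simp add: ap_gauge_const_zero)
next
  case (insert i S)
  then have "ap_gauge (\<lambda>x. p i x + (\<Sum>i\<in>S. p i x))"
    by (intro ap_gauge_add) simp_all
  with insert.hyps show ?case
    by simp
qed

text \<open>
  Otherwise \<open>min (h (r + s)) \<eta> - \<eta>\<close> would be an almost periodic function of \<open>s\<close> vanishing on \<open>I\<close>
  but equal to \<open>-\<eta>\<close> at \<open>s = -r\<close>.
\<close>

lemma ap_gauge_small_shift_in:
  fixes h :: "real^'n \<Rightarrow> real"
  assumes I: "ap_uniqueness_set I" and h: "ap_gauge h" and "\<eta> > 0"
  shows "\<exists>s\<in>I. h (r + s) \<le> \<eta>"
proof (rule ccontr)
  assume "\<not> (\<exists>s\<in>I. h (r + s) \<le> \<eta>)"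
  then have far: "\<eta> < h (r + s)" if "s \<in> I" for s
    using that by force
  define \<phi> where "\<phi> s = min (h (r + s)) \<eta> - \<eta>" for s
  have "continuous_on UNIV (\<lambda>s. h (r + s))"
    by (rule continuous_on_compose2[OF ap_gauge_continuous[OF h]])
      (auto intro: continuous_on_add continuous_on_const continuous_on_id)
  then have "continuous_on UNIV \<phi>"
    unfolding \<phi>_def by (intro continuous_on_diff continuous_on_min continuous_on_const)
  moreover have "{\<tau>. h \<tau> \<le> \<epsilon>} \<subseteq> almost_periods UNIV \<phi> \<epsilon>" for \<epsilon>
  proof (clarsimp simp: almost_periods_def)
    fix \<tau> t assume "h \<tau> \<le> \<epsilon>"
    have "\<bar>\<phi> (t + \<tau>) - \<phi> t\<bar> \<le> \<bar>h (r + (t + \<tau>)) - h (r + t)\<bar>"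
      unfolding \<phi>_def by (simp add: min_def abs_if)
    also have "\<dots> \<le> h \<tau>"
      using ap_gauge_diff[OF h, of "r + (t + \<tau>)" "r + t"] by simp
    finally show "\<bar>\<phi> (t + \<tau>) - \<phi> t\<bar> \<le> \<epsilon>"
      using \<open>h \<tau> \<le> \<epsilon>\<close> by linarith
  qed
  ultimately have "bohr_ap_on UNIV \<phi>"
    unfolding bohr_ap_on_iff
    by (auto intro: relatively_dense_in_mono[OF ap_gauge_relatively_dense[OF h]])
  moreover have "\<forall>t\<in>I. \<phi> t = 0"
    using far by (simp add: \<phi>_def min_absorb2 less_imp_le)
  ultimately have "\<phi> (- r) = 0"
    using I unfolding ap_uniqueness_set_def by blast
  moreover have "\<phi> (- r) = - \<eta>"
    using ap_gauge_zero[OF h] \<open>\<eta> > 0\<close> by (simp add: \<phi>_def)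
  ultimately show False
    using \<open>\<eta> > 0\<close> by simp
qed

lemma ap_gauge_relatively_dense_in:
  fixes h :: "real^'n \<Rightarrow> real"
  assumes add: "\<forall>x\<in>I. \<forall>y\<in>I. x + y \<in> I" and I: "ap_uniqueness_set I"
    and h: "ap_gauge h" and "\<eta> > 0"
  shows "relatively_dense_in I {\<tau>. h \<tau> \<le> \<eta>}"
proof -
  define e where "e = \<eta> / 3"
  have "e > 0"
    using \<open>\<eta> > 0\<close> by (simp add: e_def)
  obtain l a where l: "\<And>t. norm (a t - t) \<le> l" and a: "\<And>t. a t \<in> {\<tau>. h \<tau> \<le> e}"
    by (rule relatively_dense_in_UNIVE[OF ap_gauge_relatively_dense[OF h \<open>e > 0\<close>]], rule that)
  obtain \<delta> where "\<delta> > 0" and \<delta>: "\<forall>x. norm x < \<delta> \<longrightarrow> h x \<le> e"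
    using ap_gauge_small[OF h \<open>e > 0\<close>] by blast
  define d where "d t = t - a t" for t
  have "norm (d t) \<le> l" for t
    using l[of t] by (simp add: d_def norm_minus_commute)
  then have "bounded (range d)"
    by (auto simp: bounded_iff)
  have "\<forall>t. \<exists>s. s \<in> I \<and> h (d t + s) \<le> e"
    using ap_gauge_small_shift_in[OF I h \<open>e > 0\<close>] by blast
  then obtain s where s: "\<And>t. s t \<in> I" "\<And>t. h (d t + s t) \<le> e"
    by metis
  obtain L where "L > 0" and L: "\<And>t. \<exists>t'. dist (d t') (d t) < \<delta> \<and> norm (s t') \<le> L"
    by (rule bounded_range_finite_net[OF \<open>bounded (range d)\<close> \<open>\<delta> > 0\<close>], rule that)
  have "\<exists>\<tau>\<in>I. norm (\<tau> - t0) \<le> L \<and> \<tau> \<in> {\<tau>. h \<tau> \<le> \<eta>}" if "t0 \<in> I" for t0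
  proof -
    obtain t' where t': "dist (d t') (d t0) < \<delta>" and "norm (s t') \<le> L"
      using L by blast
    define \<tau> where "\<tau> = t0 + s t'"
    have "\<tau> \<in> I"
      using add \<open>t0 \<in> I\<close> s(1) unfolding \<tau>_def by blast
    have "\<tau> = a t0 + (d t0 - d t') + (d t' + s t')"
      by (simp add: \<tau>_def d_def algebra_simps)
    then have "h \<tau> \<le> h (a t0 + (d t0 - d t')) + h (d t' + s t')"
      using ap_gauge_triangle[OF h] by metis
    moreover have "h (a t0 + (d t0 - d t')) \<le> h (a t0) + h (d t0 - d t')"
      by (rule ap_gauge_triangle[OF h])
    moreover have "h (d t0 - d t') \<le> e"
      using \<delta> t' by (simp add: dist_norm norm_minus_commute)
    ultimately have "h \<tau> \<le> \<eta>"
      using a[of t0] s(2)[of t'] unfolding e_def mem_Collect_eq by linarith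
    moreover have "norm (\<tau> - t0) \<le> L"
      using \<open>norm (s t') \<le> L\<close> by (simp add: \<tau>_def)
    ultimately show ?thesis
      using \<open>\<tau> \<in> I\<close> by blast
  qed
  with \<open>L > 0\<close> show ?thesis
    unfolding relatively_dense_in_def by blast
qed

lemma ap_gauges_common_small_in:
  fixes P :: "(real^'n \<Rightarrow> real) set"
  assumes add: "\<forall>x\<in>I. \<forall>y\<in>I. x + y \<in> I" and I: "ap_uniqueness_set I"
    and "finite P" and P: "\<And>p. p \<in> P \<Longrightarrow> ap_gauge p" and "\<eta> > 0"
  shows "relatively_dense_in I {\<tau>. \<forall>p\<in>P. p \<tau> \<le> \<eta>}"
proof -
  have "ap_gauge (\<lambda>x. \<Sum>p\<in>P. p x)"
    using ap_gauge_sum[of P "\<lambda>p. p"] \<open>finite P\<close> P by simp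
  then have "relatively_dense_in I {\<tau>. (\<Sum>p\<in>P. p \<tau>) \<le> \<eta>}"
    by (rule ap_gauge_relatively_dense_in[OF add I _ \<open>\<eta> > 0\<close>])
  moreover have "p \<tau> \<le> (\<Sum>p\<in>P. p \<tau>)" if "p \<in> P" for p \<tau>
    using \<open>finite P\<close> that P ap_gauge_nonneg by (intro member_le_sum) auto
  then have "{\<tau>. (\<Sum>p\<in>P. p \<tau>) \<le> \<eta>} \<subseteq> {\<tau>. \<forall>p\<in>P. p \<tau> \<le> \<eta>}"
    by (auto intro: order_trans)
  ultimately show ?thesis
    by (rule relatively_dense_in_mono)
qed

section \<open>Translation gauges\<close>

text \<open>The truncation at \<open>1\<close> keeps the supremum finite without knowing that \<open>f\<close> is bounded.\<close>

definition shift_gauge :: "(real^'n \<Rightarrow> 'v::real_normed_vector) \<Rightarrow> real^'n \<Rightarrow> real" where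
  "shift_gauge f \<tau> = (SUP u. min 1 (norm (f (u + \<tau>) - f u)))"

lemma shift_gauge_upper: "min 1 (norm (f (u + \<tau>) - f u)) \<le> shift_gauge f \<tau>"
  unfolding shift_gauge_def by (rule cSUP_upper) (auto intro: bdd_aboveI[where M = 1])

lemma shift_gauge_least: "(\<And>u. min 1 (norm (f (u + \<tau>) - f u)) \<le> c) \<Longrightarrow> shift_gauge f \<tau> \<le> c"
  unfolding shift_gauge_def by (rule cSUP_least) auto

lemma shift_gauge_le: "(\<And>u. norm (f (u + \<tau>) - f u) \<le> \<eta>) \<Longrightarrow> shift_gauge f \<tau> \<le> \<eta>"
  by (rule shift_gauge_least) (meson min.coboundedI2)

lemma shift_gauge_leD: "shift_gauge f \<tau> \<le> \<eta> \<Longrightarrow> \<eta> < 1 \<Longrightarrow> norm (f (u + \<tau>) - f u) \<le> \<eta>"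
  using shift_gauge_upper[of f u \<tau>] by linarith

lemma shift_gauge_minus: "shift_gauge f (- \<tau>) = shift_gauge f \<tau>"
proof -
  have "shift_gauge f (- \<tau>) \<le> shift_gauge f \<tau>" for f :: "real^'n \<Rightarrow> 'v::real_normed_vector" and \<tau>
  proof (rule shift_gauge_least)
    fix u
    have "norm (f (u + - \<tau>) - f u) = norm (f ((u - \<tau>) + \<tau>) - f (u - \<tau>))"
      by (simp add: norm_minus_commute)
    then show "min 1 (norm (f (u + - \<tau>) - f u)) \<le> shift_gauge f \<tau>"
      using shift_gauge_upper[of f "u - \<tau>" \<tau>] by simp
  qed
  from this[of f \<tau>] this[of f "- \<tau>"] show ?thesis
    by simp
qed

lemma shift_gauge_triangle: "shift_gauge f (x + y) \<le> shift_gauge f x + shift_gauge f y"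
proof (rule shift_gauge_least)
  fix u
  have "norm (f (u + (x + y)) - f u) \<le> norm (f ((u + x) + y) - f (u + x)) + norm (f (u + x) - f u)"
    using norm_triangle_ineq[of "f ((u + x) + y) - f (u + x)" "f (u + x) - f u"]
    by (simp add: add.assoc)
  then have "min 1 (norm (f (u + (x + y)) - f u))
      \<le> min 1 (norm (f ((u + x) + y) - f (u + x))) + min 1 (norm (f (u + x) - f u))"
    using norm_ge_zero[of "f ((u + x) + y) - f (u + x)"] norm_ge_zero[of "f (u + x) - f u"]
    by linarith
  also have "\<dots> \<le> shift_gauge f y + shift_gauge f x"
    by (intro add_mono shift_gauge_upper)
  finally show "min 1 (norm (f (u + (x + y)) - f u)) \<le> shift_gauge f x + shift_gauge f y"
    by simp
qed

lemma bohr_ap_on_UNIV_imp_uniformly_continuous: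
  fixes f :: "real^'n \<Rightarrow> 'v::real_normed_vector"
  assumes "bohr_ap_on UNIV f"
  shows "uniformly_continuous_on UNIV f"
  unfolding uniformly_continuous_on_def
proof (intro allI impI)
  fix \<epsilon> :: real
  assume "\<epsilon> > 0"
  then have "\<epsilon> / 3 > 0"
    by simp
  with assms have dense: "relatively_dense_in UNIV (almost_periods UNIV f (\<epsilon> / 3))"
    unfolding bohr_ap_on_iff by blast
  obtain l a where l: "\<And>t. norm (a t - t) \<le> l" and a: "\<And>t. a t \<in> almost_periods UNIV f (\<epsilon> / 3)"
    by (rule relatively_dense_in_UNIVE[OF dense], rule that)
  have "uniformly_continuous_on (cball 0 (l + 1)) f"
    using assms by (intro compact_uniformly_continuous) (auto simp: bohr_ap_on_iff intro: continuous_on_subset)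
  then obtain \<delta> where "\<delta> > 0" and \<delta>: "\<forall>x\<in>cball 0 (l + 1). \<forall>x'\<in>cball 0 (l + 1).
      dist x' x < \<delta> \<longrightarrow> dist (f x') (f x) < \<epsilon> / 3"
    using \<open>\<epsilon> / 3 > 0\<close> unfolding uniformly_continuous_on_def by metis
  show "\<exists>\<delta>>0. \<forall>x\<in>UNIV. \<forall>x'\<in>UNIV. dist x' x < \<delta> \<longrightarrow> dist (f x') (f x) < \<epsilon>"
  proof (intro exI[of _ "min \<delta> 1"] conjI ballI impI)
    fix x x' :: "real^'n"
    assume "dist x' x < min \<delta> 1"
    define \<tau> where "\<tau> = a (- x)"
    have "norm (x + \<tau>) \<le> l"
      using l[of "- x"] by (simp add: \<tau>_def add.commute)
    moreover have "norm (x' + \<tau>) \<le> norm (x + \<tau>) + dist x' x"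
      using norm_triangle_ineq[of "x + \<tau>" "x' - x"] by (simp add: dist_norm algebra_simps)
    ultimately have "x + \<tau> \<in> cball 0 (l + 1)" "x' + \<tau> \<in> cball 0 (l + 1)"
      using \<open>dist x' x < min \<delta> 1\<close> by simp_all
    moreover have "dist (x' + \<tau>) (x + \<tau>) < \<delta>"
      using \<open>dist x' x < min \<delta> 1\<close> by (simp add: dist_norm)
    ultimately have "dist (f (x' + \<tau>)) (f (x + \<tau>)) < \<epsilon> / 3"
      using \<delta> by blast
    moreover have "dist (f x') (f (x' + \<tau>)) \<le> \<epsilon> / 3" "dist (f (x + \<tau>)) (f x) \<le> \<epsilon> / 3"
      using a[of "- x"] by (auto simp: almost_periods_def dist_norm norm_minus_commute \<tau>_def)
    ultimately show "dist (f x') (f x) < \<epsilon>"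
      using dist_triangle[of "f x'" "f x" "f (x' + \<tau>)"] dist_triangle[of "f (x' + \<tau>)" "f x" "f (x + \<tau>)"]
      by linarith
  qed (use \<open>\<delta> > 0\<close> in simp)
qed

lemma ap_gauge_shift_gauge:
  fixes f :: "real^'n \<Rightarrow> 'v::real_normed_vector"
  assumes "bohr_ap_on UNIV f"
  shows "ap_gauge (shift_gauge f)"
  unfolding ap_gauge_def
proof (intro conjI allI impI)
  fix x y :: "real^'n" and \<eta> :: real
  show "0 \<le> shift_gauge f x"
    by (rule order_trans[OF _ shift_gauge_upper[of f 0 x]]) simp
  show "shift_gauge f (- x) = shift_gauge f x"
    by (rule shift_gauge_minus)
  show "shift_gauge f (x + y) \<le> shift_gauge f x + shift_gauge f y"
    by (rule shift_gauge_triangle)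
  assume "\<eta> > 0"
  then obtain \<delta> where "\<delta> > 0" and \<delta>: "\<forall>x\<in>UNIV. \<forall>x'\<in>UNIV. dist x' x < \<delta> \<longrightarrow> dist (f x') (f x) < \<eta>"
    using bohr_ap_on_UNIV_imp_uniformly_continuous[OF assms] unfolding uniformly_continuous_on_def by metis
  have "shift_gauge f x \<le> \<eta>" if "norm x < \<delta>" for x
    using \<delta> that by (intro shift_gauge_le) (simp add: dist_norm less_imp_le)
  with \<open>\<delta> > 0\<close> show "\<exists>\<delta>>0. \<forall>x. norm x < \<delta> \<longrightarrow> shift_gauge f x \<le> \<eta>"
    by blast
  have "almost_periods UNIV f \<eta> \<subseteq> {\<tau>. shift_gauge f \<tau> \<le> \<eta>}"
    by (auto simp: almost_periods_def intro: shift_gauge_le)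
  with assms \<open>\<eta> > 0\<close> show "relatively_dense_in UNIV {\<tau>. shift_gauge f \<tau> \<le> \<eta>}"
    unfolding bohr_ap_on_iff by (meson relatively_dense_in_mono)
qed

section \<open>Superposition\<close>

lemma bohr_ap_on_UNIV_compact_closure_range:
  fixes f :: "real^'n \<Rightarrow> 'v::banach"
  assumes "bohr_ap_on UNIV f"
  shows "compact (closure (range f))"
  unfolding compact_eq_totally_bounded
proof (intro conjI allI impI)
  show "complete (closure (range f))"
    by (simp add: complete_eq_closed)
  fix \<epsilon> :: real
  assume "\<epsilon> > 0"
  then have "\<epsilon> / 3 > 0"
    by simp
  with assms have dense: "relatively_dense_in UNIV (almost_periods UNIV f (\<epsilon> / 3))"
    unfolding bohr_ap_on_iff by blast
  obtain l a where l: "\<And>t. norm (a t - t) \<le> l" and a: "\<And>t. a t \<in> almost_periods UNIV f (\<epsilon> / 3)"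
    by (rule relatively_dense_in_UNIVE[OF dense], rule that)
  have "compact (f ` cball 0 l)"
    using assms by (intro compact_continuous_image) (auto simp: bohr_ap_on_iff intro: continuous_on_subset)
  obtain k where "finite k" and k: "f ` cball 0 l \<subseteq> (\<Union>c\<in>k. ball c (\<epsilon> / 3))"
    using \<open>compact (f ` cball 0 l)\<close>[unfolded compact_eq_totally_bounded, THEN conjunct2, rule_format,
        OF \<open>\<epsilon> / 3 > 0\<close>]
    by (elim exE conjE) (rule that)
  have "closure (range f) \<subseteq> (\<Union>c\<in>k. ball c \<epsilon>)"
  proof
    fix z
    assume "z \<in> closure (range f)"
    then obtain u where u: "dist (f u) z < \<epsilon> / 3"
      using \<open>\<epsilon> / 3 > 0\<close> unfolding closure_approachable by blast
    define \<tau> where "\<tau> = a (- u)"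
    have "u + \<tau> \<in> cball 0 l"
      using l[of "- u"] by (simp add: \<tau>_def add.commute)
    then have "f (u + \<tau>) \<in> (\<Union>c\<in>k. ball c (\<epsilon> / 3))"
      using k by blast
    then obtain c where "c \<in> k" and c: "dist c (f (u + \<tau>)) < \<epsilon> / 3"
      by auto
    have "dist (f (u + \<tau>)) (f u) \<le> \<epsilon> / 3"
      using a[of "- u"] by (simp add: almost_periods_def dist_norm \<tau>_def)
    then have "dist c z < \<epsilon>"
      using c u dist_triangle[of c z "f (u + \<tau>)"] dist_triangle[of "f (u + \<tau>)" z "f u"] by linarith
    with \<open>c \<in> k\<close> show "z \<in> (\<Union>c\<in>k. ball c \<epsilon>)"
      by auto
  qed
  with \<open>finite k\<close> show "\<exists>k. finite k \<and> closure (range f) \<subseteq> (\<Union>x\<in>k. ball x \<epsilon>)"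
    by (intro exI[of _ k]) simp
qed

lemma bohr_ap_on_UNIV_compact_closure_image:
  fixes f :: "real^'n \<Rightarrow> 'v::banach"
  assumes "bohr_ap_on UNIV f"
  shows "compact (closure (f ` S))"
proof -
  have "compact (closure (range f) \<inter> closure (f ` S))"
    by (rule compact_Int_closed[OF bohr_ap_on_UNIV_compact_closure_range[OF assms] closed_closure])
  moreover have "closure (range f) \<inter> closure (f ` S) = closure (f ` S)"
    using closure_mono[of "f ` S" "range f"] by blast
  ultimately show ?thesis
    by simp
qed

lemma uniformly_continuous_on_subset:
  fixes f :: "'a::metric_space \<Rightarrow> 'b::metric_space"
  shows "uniformly_continuous_on S f \<Longrightarrow> T \<subseteq> S \<Longrightarrow> uniformly_continuous_on T f"
  unfolding uniformly_continuous_on_def by (meson subsetD)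

lemma uniformly_continuous_on_compose_graph:
  fixes F :: "'a::metric_space \<Rightarrow> 'b::metric_space" and G :: "'a \<times> 'b \<Rightarrow> 'c::metric_space"
  assumes F: "uniformly_continuous_on I F" and G: "uniformly_continuous_on (I \<times> B) G"
    and "F ` I \<subseteq> B"
  shows "uniformly_continuous_on I (\<lambda>t. G (t, F t))"
proof -
  have "uniformly_continuous_on I (\<lambda>t. (t, F t))"
    unfolding uniformly_continuous_on_def
  proof (intro allI impI)
    fix e :: real
    assume "e > 0"
    then obtain d where "d > 0" and d: "\<forall>x\<in>I. \<forall>x'\<in>I. dist x' x < d \<longrightarrow> dist (F x') (F x) < e / 2"
      using F unfolding uniformly_continuous_on_def by (meson half_gt_zero)
    show "\<exists>d>0. \<forall>x\<in>I. \<forall>x'\<in>I. dist x' x < d \<longrightarrow> dist (x', F x') (x, F x) < e"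
    proof (intro exI[of _ "min d (e / 2)"] conjI ballI impI)
      fix x x'
      assume "x \<in> I" "x' \<in> I" and "dist x' x < min d (e / 2)"
      moreover have "dist (x', F x') (x, F x) \<le> dist x' x + dist (F x') (F x)"
        unfolding dist_Pair_Pair by (rule sqrt_sum_squares_le_sum) auto
      ultimately show "dist (x', F x') (x, F x) < e"
        using d by fastforce
    qed (use \<open>d > 0\<close> \<open>e > 0\<close> in simp)
  qed
  moreover have "uniformly_continuous_on ((\<lambda>t. (t, F t)) ` I) G"
    using \<open>F ` I \<subseteq> B\<close> by (intro uniformly_continuous_on_subset[OF G]) auto
  ultimately show ?thesis
    using uniformly_continuous_on_compose[of I "\<lambda>t. (t, F t)" G] by simp
qed

lemma ap_admissible_for_section_extensions:
  fixes G :: "(real^'n) \<times> 'y::real_normed_vector \<Rightarrow> 'z::banach"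
  assumes adm: "ap_admissible_for TYPE('z) I" and G: "bohr_B_ap_on I BB G" "B \<in> BB"
    and G_uc: "uniformly_continuous_on (I \<times> B) G"
  obtains Gt where "\<And>y. y \<in> B \<Longrightarrow> bohr_ap_on UNIV (Gt y)"
    "\<And>y t. y \<in> B \<Longrightarrow> t \<in> I \<Longrightarrow> Gt y t = G (t, y)"
proof -
  have "\<exists>g. bohr_ap_on UNIV g \<and> (\<forall>t\<in>I. g t = G (t, y))" if "y \<in> B" for y
  proof -
    have uc: "uniformly_continuous_on I (\<lambda>t. G (t, y))"
      using uniformly_continuous_on_compose_graph[OF uniformly_continuous_on_const G_uc] \<open>y \<in> B\<close>
      by auto
    obtain g where "bohr_ap_on UNIV g" "\<And>t. t \<in> I \<Longrightarrow> g t = G (t, y)"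
      by (rule ap_admissible_for_extension[OF adm uc bohr_B_ap_on_section[OF G \<open>y \<in> B\<close>]], rule that)
    then show ?thesis
      by blast
  qed
  then obtain Gt where "\<forall>y\<in>B. bohr_ap_on UNIV (Gt y) \<and> (\<forall>t\<in>I. Gt y t = G (t, y))"
    by metis
  then show thesis
    using that by blast
qed

lemma superposition_dist_le:
  fixes G :: "'a::metric_space \<times> 'b::metric_space \<Rightarrow> 'c::metric_space"
  assumes \<delta>: "\<forall>p\<in>I \<times> B. \<forall>q\<in>I \<times> B. dist q p < \<delta> \<longrightarrow> dist (G q) (G p) < \<epsilon> / 4"
    and "s \<in> I" "t \<in> I" "x \<in> B" "x' \<in> B" "y \<in> B"
    and "dist x' x < \<delta>" "dist y x < \<delta>" "dist (G (s, y)) (G (t, y)) \<le> \<epsilon> / 4"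
  shows "dist (G (s, x')) (G (t, x)) \<le> \<epsilon>"
proof -
  have "dist (G (s, x')) (G (s, x)) < \<epsilon> / 4" "dist (G (s, x)) (G (s, y)) < \<epsilon> / 4"
    "dist (G (t, y)) (G (t, x)) < \<epsilon> / 4"
    using assms by (auto intro!: \<delta>[rule_format] simp: dist_Pair_Pair dist_commute)
  with \<open>dist (G (s, y)) (G (t, y)) \<le> \<epsilon> / 4\<close> show ?thesis
    using dist_triangle[of "G (s, x')" "G (t, x)" "G (s, x)"] dist_triangle[of "G (s, x)" "G (t, x)" "G (s, y)"]
      dist_triangle[of "G (s, y)" "G (t, x)" "G (t, y)"]
    by linarith
qed

lemma almost_periods_superposition:
  fixes F :: "real^'n \<Rightarrow> 'y::real_normed_vector" and G :: "(real^'n) \<times> 'y \<Rightarrow> 'z::real_normed_vector"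
  assumes add: "\<forall>x\<in>I. \<forall>y\<in>I. x + y \<in> I" and I: "ap_uniqueness_set I"
    and "compact B" "F ` I \<subseteq> B"
    and Ft: "bohr_ap_on UNIV Ft" "\<And>t. t \<in> I \<Longrightarrow> Ft t = F t"
    and Gt: "\<And>y. y \<in> B \<Longrightarrow> bohr_ap_on UNIV (Gt y)" "\<And>y t. y \<in> B \<Longrightarrow> t \<in> I \<Longrightarrow> Gt y t = G (t, y)"
    and G: "uniformly_continuous_on (I \<times> B) G"
    and "\<epsilon> > 0"
  shows "relatively_dense_in I (almost_periods I (\<lambda>t. G (t, F t)) \<epsilon>)"
proof -
  have "\<epsilon> / 4 > 0"
    using \<open>\<epsilon> > 0\<close> by simp
  obtain \<delta> where "\<delta> > 0"
    and \<delta>: "\<forall>p\<in>I \<times> B. \<forall>q\<in>I \<times> B. dist q p < \<delta> \<longrightarrow> dist (G q) (G p) < \<epsilon> / 4"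
    using G[unfolded uniformly_continuous_on_def, rule_format, OF \<open>\<epsilon> / 4 > 0\<close>]
    by (elim exE conjE) (rule that)
  obtain Y where "finite Y" "Y \<subseteq> B" and Y: "B \<subseteq> (\<Union>y\<in>Y. ball y \<delta>)"
    using seq_compact_imp_totally_bounded[OF compact_imp_seq_compact[OF \<open>compact B\<close>], rule_format, OF \<open>\<delta> > 0\<close>]
    by (elim exE conjE) (rule that)
  define P where "P = insert (shift_gauge Ft) ((\<lambda>y. shift_gauge (Gt y)) ` Y)"
  define \<eta> where "\<eta> = min (1 / 2) (min (\<delta> / 2) (\<epsilon> / 4))"
  have "\<eta> > 0" "\<eta> < 1" "\<eta> < \<delta>" "\<eta> \<le> \<epsilon> / 4"
    using \<open>\<delta> > 0\<close> \<open>\<epsilon> > 0\<close> by (auto simp: \<eta>_def)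
  have "finite P" "\<And>p. p \<in> P \<Longrightarrow> ap_gauge p"
    using \<open>finite Y\<close> \<open>Y \<subseteq> B\<close> Ft Gt by (auto simp: P_def intro: ap_gauge_shift_gauge)
  then have dense: "relatively_dense_in I (I \<inter> {\<tau>. \<forall>p\<in>P. p \<tau> \<le> \<eta>})"
    unfolding relatively_dense_in_Int_self using ap_gauges_common_small_in[OF add I] \<open>\<eta> > 0\<close> by blast
  have "I \<inter> {\<tau>. \<forall>p\<in>P. p \<tau> \<le> \<eta>} \<subseteq> almost_periods I (\<lambda>t. G (t, F t)) \<epsilon>"
    unfolding almost_periods_def
  proof (intro subsetI CollectI ballI, elim IntE CollectE)
    fix \<tau> t
    assume "\<tau> \<in> I" and \<tau>: "\<forall>p\<in>P. p \<tau> \<le> \<eta>" and "t \<in> I"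
    then have "t + \<tau> \<in> I" "F t \<in> B" "F (t + \<tau>) \<in> B"
      using add \<open>\<tau> \<in> I\<close> \<open>F ` I \<subseteq> B\<close> by auto
    obtain y where "y \<in> Y" and y: "dist y (F t) < \<delta>"
      using Y \<open>F t \<in> B\<close> by auto
    then have "y \<in> B"
      using \<open>Y \<subseteq> B\<close> by blast
    have "norm (F (t + \<tau>) - F t) \<le> \<eta>"
      using shift_gauge_leD[OF _ \<open>\<eta> < 1\<close>, of Ft \<tau> t] \<tau> Ft(2) \<open>t \<in> I\<close> \<open>t + \<tau> \<in> I\<close>
      by (simp add: P_def add.commute)
    moreover have "norm (G (t + \<tau>, y) - G (t, y)) \<le> \<eta>"
      using shift_gauge_leD[OF _ \<open>\<eta> < 1\<close>, of "Gt y" \<tau> t] \<tau> Gt(2) \<open>y \<in> Y\<close> \<open>y \<in> B\<close> \<open>t \<in> I\<close> \<open>t + \<tau> \<in> I\<close>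
      by (simp add: P_def add.commute)
    ultimately have "dist (G (t + \<tau>, F (t + \<tau>))) (G (t, F t)) \<le> \<epsilon>"
      using \<open>\<eta> < \<delta>\<close> \<open>\<eta> \<le> \<epsilon> / 4\<close>
      by (intro superposition_dist_le[OF \<delta> \<open>t + \<tau> \<in> I\<close> \<open>t \<in> I\<close> \<open>F t \<in> B\<close> \<open>F (t + \<tau>) \<in> B\<close> \<open>y \<in> B\<close> _ y])
        (simp_all add: dist_norm)
    then show "norm (G (t + \<tau>, F (t + \<tau>)) - G (t, F t)) \<le> \<epsilon>"
      by (simp add: dist_norm)
  qed
  with dense show ?thesis
    by (rule relatively_dense_in_mono)
qed

lemma bohr_ap_on_superposition:
  fixes F :: "real^'n \<Rightarrow> 'y::real_normed_vector" and G :: "(real^'n) \<times> 'y \<Rightarrow> 'z::banach"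
  assumes adm: "ap_admissible_for TYPE('z) I" and add: "\<forall>x\<in>I. \<forall>y\<in>I. x + y \<in> I"
    and "compact B" "F ` I \<subseteq> B"
    and Ft: "bohr_ap_on UNIV Ft" "\<And>t. t \<in> I \<Longrightarrow> Ft t = F t"
    and Gt: "\<And>y. y \<in> B \<Longrightarrow> bohr_ap_on UNIV (Gt y)" "\<And>y t. y \<in> B \<Longrightarrow> t \<in> I \<Longrightarrow> Gt y t = G (t, y)"
    and G: "uniformly_continuous_on (I \<times> B) G"
    and W: "uniformly_continuous_on I (\<lambda>t. G (t, F t))"
  shows "bohr_ap_on I (\<lambda>t. G (t, F t))"
proof -
  \<comment> \<open>For trivial \<open>'z\<close> admissibility yields no uniqueness, but then \<open>W\<close> is constant.\<close>
  consider (trivial) "\<And>z :: 'z. z = 0" | (nontrivial) v :: 'z where "v \<noteq> 0"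
    by blast
  then show ?thesis
  proof cases
    case trivial
    then have "(\<lambda>t. G (t, F t)) = (\<lambda>_. 0)"
      by blast
    then show ?thesis
      by (simp add: bohr_ap_on_const)
  next
    case nontrivial
    then have "ap_uniqueness_set I"
      by (rule ap_admissible_for_imp_ap_uniqueness_set[OF adm])
    then have "relatively_dense_in I (almost_periods I (\<lambda>t. G (t, F t)) \<epsilon>)" if "\<epsilon> > 0" for \<epsilon>
      using almost_periods_superposition[OF add _ \<open>compact B\<close> \<open>F ` I \<subseteq> B\<close> Ft Gt G that] by blast
    with W show ?thesis
      unfolding bohr_ap_on_iff using uniformly_continuous_imp_continuous by blast
  qed
qed

theorem theorem2p50:
  fixes I :: "(real^'n) set"
    and BB :: "'y::banach set set"
    and F :: "real^'n \<Rightarrow> 'y"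
    and G :: "(real^'n) \<times> 'y \<Rightarrow> 'z::banach"
    and B :: "'y set"
  assumes BB_ne: "\<forall>B'\<in>BB. B' \<noteq> {}"
    and adm_Y: "ap_admissible_for TYPE('y) I"
    and adm_Z: "ap_admissible_for TYPE('z) I"
    and adm_YZ: "ap_admissible_for TYPE('y \<times> 'z) I"
    and adm_YC: "ap_admissible_for TYPE('y \<times> ('y \<Rightarrow>\<^sub>C 'z)) I"
    and F_uc: "uniformly_continuous_on I F"
    and F_ap: "bohr_ap_on I F"
    and G_ap: "bohr_B_ap_on I BB G"
    and B_def: "closure (F ` I) = B"
    and B_in: "B \<in> BB"
    and G_uc: "uniformly_continuous_on (I \<times> B) G"
  shows "uniformly_continuous_on I (\<lambda>t. G (t, F t)) \<and> bohr_ap_on I (\<lambda>t. G (t, F t))"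
proof -
  have add: "\<forall>x\<in>I. \<forall>y\<in>I. x + y \<in> I"
    by (rule ap_admissible_for_add_closed[OF adm_Y])
  have FB: "F ` I \<subseteq> B"
    using B_def closure_subset by blast
  have W_uc: "uniformly_continuous_on I (\<lambda>t. G (t, F t))"
    by (rule uniformly_continuous_on_compose_graph[OF F_uc G_uc FB])
  obtain Ft where Ft: "bohr_ap_on UNIV Ft" "\<And>t. t \<in> I \<Longrightarrow> Ft t = F t"
    by (rule ap_admissible_for_extension[OF adm_Y F_uc F_ap], rule that)
  have "compact B"
    using bohr_ap_on_UNIV_compact_closure_image[OF Ft(1), of I] B_def Ft(2) by (simp cong: image_cong)
  obtain Gt where Gt: "\<And>y. y \<in> B \<Longrightarrow> bohr_ap_on UNIV (Gt y)"
    "\<And>y t. y \<in> B \<Longrightarrow> t \<in> I \<Longrightarrow> Gt y t = G (t, y)"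
    by (rule ap_admissible_for_section_extensions[OF adm_Z G_ap B_in G_uc], rule that)
  show ?thesis
    using bohr_ap_on_superposition[OF adm_Z add \<open>compact B\<close> FB Ft Gt G_uc W_uc] W_uc by blast
qed

end
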